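(* Let $G$ be a connected graph, $X$ a minimum vertex cover of $G$, and $\ell,d$ integers. Suppose some vertex $x^\circ\in X$ is adjacent to a pendant vertex (a vertex of degree $1$). Suppose there are subsets $X_s\subseteq X$ and $Y_s\subseteq V(G)\setminus X$ such that (i) $(X\setminus X_s)\cup Y_s$ is a vertex cover of $G$, (ii) $\mathrm{rank}((X\setminus X_s)\cup Y_s)\ge \ell$, and (iii) $|Y_s|-|X_s|\le \ell-d$. Then there are subsets $X'_s\subseteq X$ and $Y'_s\subseteq V(G)\setminus X$ satisfying (i), (ii), (iii) (with $X_s,Y_s$ replaced by $X'_s,Y'_s$) and additionally $x^\circ\notin X'_s$.
   Context: All graphs are finite, simple and undirected. $\mathrm{rank}(H)$ is $|V(H)|$ minus the number of connected components of $H$, and for $S\subseteq V(G)$, $\mathrm{rank}(S):=\mathrm{rank}(G[S])$. *)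

theory Defs
  imports Main
begin

definition simple_graph :: "'a set \<Rightarrow> 'a set set \<Rightarrow> bool" where
  "simple_graph V E \<longleftrightarrow> finite V \<and> (\<forall>e\<in>E. e \<subseteq> V \<and> card e = 2)"

definition adj_in :: "'a set set \<Rightarrow> 'a set \<Rightarrow> ('a \<times> 'a) set" where
  "adj_in E S = {(u, v). u \<in> S \<and> v \<in> S \<and> {u, v} \<in> E}"

definition connected_graph :: "'a set \<Rightarrow> 'a set set \<Rightarrow> bool" where
  "connected_graph V E \<longleftrightarrow> V \<noteq> {} \<and> (\<forall>u\<in>V. \<forall>v\<in>V. (u, v) \<in> (adj_in E V)\<^sup>*)"

definition num_components :: "'a set set \<Rightarrow> 'a set \<Rightarrow> nat" where
  "num_components E S = card (S // ((adj_in E S)\<^sup>*))"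

definition rank_of :: "'a set set \<Rightarrow> 'a set \<Rightarrow> nat" where
  "rank_of E S = card S - num_components E S"

definition vertex_cover :: "'a set \<Rightarrow> 'a set set \<Rightarrow> 'a set \<Rightarrow> bool" where
  "vertex_cover V E C \<longleftrightarrow> C \<subseteq> V \<and> (\<forall>e\<in>E. e \<inter> C \<noteq> {})"

definition min_vertex_cover :: "'a set \<Rightarrow> 'a set set \<Rightarrow> 'a set \<Rightarrow> bool" where
  "min_vertex_cover V E X \<longleftrightarrow> vertex_cover V E X \<and>
     (\<forall>C. vertex_cover V E C \<longrightarrow> card X \<le> card C)"

definition degree :: "'a set set \<Rightarrow> 'a \<Rightarrow> nat" where
  "degree E v = card {u. {u, v} \<in> E}"

end

theory Submission
  imports Defs
begin

text \<open>If \<open>x\<^sup>\<circ> \<in> X\<^sub>s\<close>, let \<open>p\<close> be a pendant neighbour of \<open>x\<^sup>\<circ>\<close>. By minimality of \<open>X\<close>,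
  \<open>p \<notin> X\<close>; as the edge \<open>x\<^sup>\<circ>p\<close> must be covered, \<open>p \<in> Y\<^sub>s\<close>. Trading \<open>p\<close> for \<open>x\<^sup>\<circ>\<close>, i.e. taking
  \<open>X\<^sub>s' = X\<^sub>s - {x\<^sup>\<circ>}\<close> and \<open>Y\<^sub>s' = Y\<^sub>s - {p}\<close>, keeps a vertex cover of the same size and leaves
  \<open>|Y\<^sub>s| - |X\<^sub>s|\<close> unchanged. Since \<open>p\<close> is an isolated vertex of the old cover, the swap cannot
  increase the number of components, so the rank does not drop.\<close>

lemma pendant_neighbour_unique:
  assumes "degree E p = 1" and "{x, p} \<in> E" and "{u, p} \<in> E"
  shows "u = x"
proof -
  obtain w where "{u. {u, p} \<in> E} = {w}"
    using assms(1) by (auto simp: degree_def card_Suc_eq)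
  then have "u \<in> {w}" "x \<in> {w}" using assms(2,3) by (metis mem_Collect_eq)+
  then show ?thesis by simp
qed

lemma simple_graph_edge_at:
  assumes "simple_graph V E" and "e \<in> E" and "p \<in> e"
  obtains u where "e = {u, p}"
proof -
  have "card e = 2" using assms(1,2) by (simp add: simple_graph_def)
  then obtain a b where "e = {a, b}" by (auto simp: card_2_iff)
  with assms(3) that show ?thesis by (auto simp: insert_commute)
qed

lemma vertex_cover_superset_of_neighbours:
  assumes "simple_graph V E" and "vertex_cover V E S" and "T \<subseteq> V" and "S - {p} \<subseteq> T"
    and nbr: "\<And>u. {u, p} \<in> E \<Longrightarrow> u \<in> T"
  shows "vertex_cover V E T"
  unfolding vertex_cover_def
proof (intro conjI ballI)
  show "T \<subseteq> V" by fact
next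
  fix e assume e: "e \<in> E"
  show "e \<inter> T \<noteq> {}"
  proof (cases "p \<in> e")
    case True
    then obtain u where "e = {u, p}" using simple_graph_edge_at[OF assms(1) e] by blast
    with e nbr show ?thesis by auto
  next
    case False
    moreover have "e \<inter> S \<noteq> {}" using assms(2) e by (simp add: vertex_cover_def)
    ultimately show ?thesis using assms(4) by blast
  qed
qed

lemma simple_graph_no_loop:
  assumes "simple_graph V E"
  shows "{p, p} \<notin> E"
  using assms by (auto simp: simple_graph_def)

lemma min_vertex_cover_excludes_vertex_with_covered_neighbours:
  assumes "simple_graph V E" and "min_vertex_cover V E X"
    and nbr: "\<And>u. {u, p} \<in> E \<Longrightarrow> u \<in> X"
  shows "p \<notin> X"
proof
  assume pX: "p \<in> X"
  have cover: "vertex_cover V E X" using assms(2) by (simp add: min_vertex_cover_def)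
  have "{u, p} \<in> E \<Longrightarrow> u \<in> X - {p}" for u
    using nbr simple_graph_no_loop[OF assms(1)] by blast
  with cover have "vertex_cover V E (X - {p})"
    by (intro vertex_cover_superset_of_neighbours[OF assms(1) cover]) (auto simp: vertex_cover_def)
  hence "card X \<le> card (X - {p})" using assms(2) by (simp add: min_vertex_cover_def)
  moreover have "finite X"
    using cover assms(1) finite_subset by (simp add: vertex_cover_def simple_graph_def) blast
  ultimately show False using pX by (metis card_Diff1_less leD)
qed

text \<open>Each component of the new set is the image of a component of the old one: the singleton
  component \<open>{p}\<close> goes to the component of \<open>x\<close>, every other component \<open>C\<close> to the component
  containing \<open>C\<close>.\<close>

lemma num_components_replace_isolated:
  assumes "finite S" and "p \<in> S" and isolated: "\<And>u. u \<in> S \<Longrightarrow> {u, p} \<notin> E"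
  shows "num_components E ((S - {p}) \<union> {x}) \<le> num_components E S"
proof -
  define S' where "S' = (S - {p}) \<union> {x}"
  define R where "R = adj_in E S"
  define R' where "R' = adj_in E S'"
  have avoids_p: "a \<noteq> p \<and> b \<noteq> p" if "(a, b) \<in> R" for a b
    using that isolated by (auto simp: R_def adj_in_def insert_commute)
  have "R \<subseteq> R'"
    using avoids_p by (auto simp: R_def R'_def adj_in_def S'_def)
  hence reach_mono: "R\<^sup>* \<subseteq> R'\<^sup>*" by (rule rtrancl_mono)
  have p_unreachable: "(a, p) \<notin> R\<^sup>*" if "a \<noteq> p" for a
  proof
    assume "(a, p) \<in> R\<^sup>*"
    then show False using that avoids_p by (cases rule: rtranclE) auto
  qed
  define g where "g C = (if p \<in> C then R'\<^sup>* `` {x} else R'\<^sup>* `` C)" for C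
  have "S' // R'\<^sup>* \<subseteq> g ` (S // R\<^sup>*)"
  proof
    fix D assume "D \<in> S' // R'\<^sup>*"
    then obtain a where a: "a \<in> S'" "D = R'\<^sup>* `` {a}" by (auto simp: quotient_def)
    show "D \<in> g ` (S // R\<^sup>*)"
    proof (cases "a = x")
      case True
      then have "g (R\<^sup>* `` {p}) = D" using a by (auto simp: g_def)
      moreover have "R\<^sup>* `` {p} \<in> S // R\<^sup>*" using assms(2) by (auto simp: quotient_def)
      ultimately show ?thesis by blast
    next
      case False
      then have aS: "a \<in> S" "a \<noteq> p" using a by (auto simp: S'_def)
      have "R'\<^sup>* `` (R\<^sup>* `` {a}) = D"
        using reach_mono a(2) by (auto intro: rtrancl_trans)
      with p_unreachable aS have "g (R\<^sup>* `` {a}) = D" by (auto simp: g_def)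
      moreover have "R\<^sup>* `` {a} \<in> S // R\<^sup>*" using aS by (auto simp: quotient_def)
      ultimately show ?thesis by blast
    qed
  qed
  moreover have "finite (S // R\<^sup>*)" using assms(1) by (simp add: quotient_def)
  ultimately have "card (S' // R'\<^sup>*) \<le> card (S // R\<^sup>*)"
    by (meson card_image_le card_mono finite_imageI order_trans)
  then show ?thesis by (simp add: num_components_def S'_def R'_def R_def)
qed

lemma rank_of_replace_isolated:
  assumes "finite S" and "p \<in> S" and "x \<notin> S" and "\<And>u. u \<in> S \<Longrightarrow> {u, p} \<notin> E"
  shows "rank_of E S \<le> rank_of E ((S - {p}) \<union> {x})"
proof -
  have "card ((S - {p}) \<union> {x}) = card S"
    using assms(1-3) by (simp add: card_insert_if) (metis Suc_pred card_gt_0_iff empty_iff)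
  with num_components_replace_isolated[OF assms(1,2,4)] show ?thesis
    by (simp add: rank_of_def diff_le_mono2)
qed

lemma vertex_cover_swap_pendant_keeps_rank:
  assumes "simple_graph V E" and "vertex_cover V E S" and "x \<in> V" and "x \<notin> S"
    and "p \<in> S" and nbr: "\<And>u. {u, p} \<in> E \<Longrightarrow> u = x"
  shows "vertex_cover V E ((S - {p}) \<union> {x})" and "rank_of E S \<le> rank_of E ((S - {p}) \<union> {x})"
proof -
  show "vertex_cover V E ((S - {p}) \<union> {x})"
    using assms(2,3) nbr
    by (intro vertex_cover_superset_of_neighbours[OF assms(1,2)]) (auto simp: vertex_cover_def)
  have "S \<subseteq> V" "finite V"
    using assms(1,2) by (simp_all add: simple_graph_def vertex_cover_def)
  then have "finite S" by (rule finite_subset)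
  moreover have "{u, p} \<notin> E" if "u \<in> S" for u
    using that nbr assms(4) by blast
  ultimately show "rank_of E S \<le> rank_of E ((S - {p}) \<union> {x})"
    using assms(4,5) by (intro rank_of_replace_isolated) auto
qed

lemma card_remove_one_each_diff:
  assumes "finite A" and "finite B" and "a \<in> A" and "b \<in> B"
  shows "int (card (B - {b})) - int (card (A - {a})) = int (card B) - int (card A)"
proof -
  have "card A > 0" "card B > 0" using assms by (auto simp: card_gt_0_iff)
  then show ?thesis using assms by (simp add: of_nat_diff)
qed

theorem lemma2:
  fixes V :: "'a set" and E :: "'a set set" and X :: "'a set"
    and x0 :: 'a and l d :: int
  assumes "simple_graph V E"
    and "connected_graph V E"
    and "min_vertex_cover V E X"
    and "x0 \<in> X"
    and "\<exists>p \<in> V. {x0, p} \<in> E \<and> degree E p = 1"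
    and "Xs \<subseteq> X" and "Ys \<subseteq> V - X"
    and "vertex_cover V E ((X - Xs) \<union> Ys)"
    and "int (rank_of E ((X - Xs) \<union> Ys)) \<ge> l"
    and "int (card Ys) - int (card Xs) \<le> l - d"
  shows "\<exists>Xs' Ys'. Xs' \<subseteq> X \<and> Ys' \<subseteq> V - X
           \<and> vertex_cover V E ((X - Xs') \<union> Ys')
           \<and> int (rank_of E ((X - Xs') \<union> Ys')) \<ge> l
           \<and> int (card Ys') - int (card Xs') \<le> l - d
           \<and> x0 \<notin> Xs'"
proof (cases "x0 \<in> Xs")
  case False
  then show ?thesis using assms by blast
next
  case x0_swapped: True
  define S where "S = (X - Xs) \<union> Ys"
  obtain p where p: "{x0, p} \<in> E" "degree E p = 1" using assms(5) by blast
  have nbr: "\<And>u. {u, p} \<in> E \<Longrightarrow> u = x0" using pendant_neighbour_unique[OF p(2,1)] .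
  have x0S: "x0 \<notin> S" using x0_swapped assms(4,7) by (auto simp: S_def)
  have "{x0, p} \<inter> S \<noteq> {}" using assms(8)[folded S_def] p(1) unfolding vertex_cover_def by blast
  with x0S have pS: "p \<in> S" by blast
  have "p \<notin> X"
    by (rule min_vertex_cover_excludes_vertex_with_covered_neighbours[OF assms(1,3)])
      (use nbr assms(4) in blast)
  with pS have pYs: "p \<in> Ys" by (auto simp: S_def)
  have XV: "X \<subseteq> V" using assms(3) by (simp add: min_vertex_cover_def vertex_cover_def)
  with assms(4) have x0V: "x0 \<in> V" by blast
  note swapped = vertex_cover_swap_pendant_keeps_rank[OF assms(1) assms(8)[folded S_def] x0V x0S pS nbr]
  have "finite V" using assms(1) by (simp add: simple_graph_def)
  then have "finite Xs" "finite Ys" using XV assms(6,7) by (meson Diff_subset finite_subset order_trans)+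
  note same_balance = card_remove_one_each_diff[OF this x0_swapped pYs]
  have new_set: "(X - (Xs - {x0})) \<union> (Ys - {p}) = (S - {p}) \<union> {x0}"
    using assms(4,7) x0_swapped pYs by (auto simp: S_def)
  show ?thesis
  proof (intro exI conjI)
    show "Xs - {x0} \<subseteq> X" and "Ys - {p} \<subseteq> V - X" and "x0 \<notin> Xs - {x0}"
      using assms(6,7) by auto
    show "vertex_cover V E ((X - (Xs - {x0})) \<union> (Ys - {p}))"
      unfolding new_set by (rule swapped(1))
    show "l \<le> int (rank_of E ((X - (Xs - {x0})) \<union> (Ys - {p})))"
      unfolding new_set using assms(9)[folded S_def] swapped(2) by linarith
    show "int (card (Ys - {p})) - int (card (Xs - {x0})) \<le> l - d"
      using same_balance assms(10) by linarith
  qed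
qed

end
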